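(* Consider an $N$-player distributionally robust game (as defined in the context) with ambiguity set $$\mathcal{F} = \{ Q : Q[\mathbf{W}\cdot\mathrm{vec}(\tilde{\mathbf{P}})\le\mathbf{h}] = 1,\ \mathbb{E}_Q[\mathrm{vec}\,\tilde{\mathbf{P}}] = \mathbf{m},\ \mathbb{E}_Q[\|\mathrm{vec}(\tilde{\mathbf{P}})-\mathbf{m}\|_1]\le s\},$$ where $\{\mathbf{P}:\mathbf{W}\mathrm{vec}(\mathbf{P})\le\mathbf{h}\}$ is a bounded polyhedral set containing $\mathbf{m}$ (i.e. $\mathbf{W}\mathbf{m}\le\mathbf{h}$) and $s\ge0$, in which all players are risk neutral ($\varepsilon_i=1$ for all $i$). Then its set of Distributionally Robust Optimization Equilibria equals the set of Nash equilibria of the complete information game with fixed payoff matrix $\boldsymbol{\Psi}$, where $\mathrm{vec}(\boldsymbol{\Psi})=\mathbf{m}$.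
   Context: A finite $N$-player game: player $i$ has actions $\{1,\dots,a_i\}$ and mixed strategy set $S_{a_i} = \{\mathbf{x}^i\in\mathbb{R}^{a_i} : \mathbf{x}^i\ge 0,\ \sum_{j=1}^{a_i} x^i_j = 1\}$; $S=\prod_{i} S_{a_i}$. A payoff matrix $\mathbf{P}\in\mathbb{R}^{N\times\prod_{k=1}^N a_k}$ has entries $\mathbf{P}^i_{(j_1,\dots,j_N)}$, the payoff to player $i$ when each player $k$ plays action $j_k$. The expected payoff is $\pi_i(\mathbf{P};\mathbf{x}^1,\dots,\mathbf{x}^N) = \sum_{j_1=1}^{a_1}\cdots\sum_{j_N=1}^{a_N}\mathbf{P}^i_{(j_1,\dots,j_N)}\prod_{k=1}^N x^k_{j_k}$. Write $\mathbf{x}^{-i}$ for the strategies of all players except $i$, and $(\mathbf{x}^{-i},\mathbf{u}^i)$ for the profile with $\mathbf{x}^i$ replaced by $\mathbf{u}^i$. $\mathrm{vec}(\mathbf{A})$ is the column vector obtained by stacking the rows of $\mathbf{A}$. $\tilde{\mathbf{P}}$ denotes a random payoff matrix. For a loss random variable $L$ and $\varepsilon\in(0,1]$, $Q\text{-CVaR}_\varepsilon(L) = \min_{\zeta\in\mathbb{R}} \zeta + \frac{1}{\varepsilon}\mathbb{E}_Q[L-\zeta]^+$, with $[x]^+=\max\{x,0\}$. Distributionally robust game: commonly known ambiguity set $\mathcal{F}$ of distributions $Q$ of $\tilde{\mathbf{P}}$ and risk levels $\varepsilon_i\in(0,1]$. A profile $(\mathbf{x}^1,\dots,\mathbf{x}^N)\in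 S$ is a Distributionally Robust Optimization Equilibrium iff for every $i$, $\mathbf{x}^i\in\arg\min_{\mathbf{u}^i\in S_{a_i}}\sup_{Q\in\mathcal{F}} Q\text{-CVaR}_{\varepsilon_i}[-\pi_i(\tilde{\mathbf{P}};\mathbf{x}^{-i},\mathbf{u}^i)]$. A Nash equilibrium of the game with fixed payoff matrix $\check{\mathbf{P}}$ is a profile in $S$ with $\mathbf{x}^i\in\arg\max_{\mathbf{u}^i\in S_{a_i}}\pi_i(\check{\mathbf{P}};\mathbf{x}^{-i},\mathbf{u}^i)$ for every $i$. *)

theory Defs
  imports "HOL-Probability.Probability"
begin

text \<open>Players are 0..N-1; player k has actions 0..a k - 1 (shifted from 1..a k).
  A payoff matrix P is represented by its vectorisation vec(P), a real function on the
  finite index set {..<N} \<times> profiles, (i, j) \<mapsto> P^i_j.\<close>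

definition profiles :: "nat \<Rightarrow> (nat \<Rightarrow> nat) \<Rightarrow> (nat \<Rightarrow> nat) set" where
  "profiles N a = PiE {..<N} (\<lambda>k. {..<a k})"

definition idx :: "nat \<Rightarrow> (nat \<Rightarrow> nat) \<Rightarrow> (nat \<times> (nat \<Rightarrow> nat)) set" where
  "idx N a = {..<N} \<times> profiles N a"

definition strat_simplex :: "nat \<Rightarrow> (nat \<Rightarrow> real) set" where
  "strat_simplex n = {u. (\<forall>j<n. 0 \<le> u j) \<and> (\<Sum>j<n. u j) = 1}"

definition strat_profiles :: "nat \<Rightarrow> (nat \<Rightarrow> nat) \<Rightarrow> (nat \<Rightarrow> nat \<Rightarrow> real) set" where
  "strat_profiles N a = {x. \<forall>k<N. x k \<in> strat_simplex (a k)}"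

definition payoff ::
  "nat \<Rightarrow> (nat \<Rightarrow> nat) \<Rightarrow> (nat \<times> (nat \<Rightarrow> nat) \<Rightarrow> real) \<Rightarrow> nat \<Rightarrow> (nat \<Rightarrow> nat \<Rightarrow> real) \<Rightarrow> real" where
  "payoff N a p i x = (\<Sum>j\<in>profiles N a. p (i, j) * (\<Prod>k<N. x k (j k)))"

definition cvar :: "'w measure \<Rightarrow> real \<Rightarrow> ('w \<Rightarrow> real) \<Rightarrow> real" where
  "cvar Q eps L = (INF \<zeta>::real. \<zeta> + (1 / eps) * (\<integral>\<omega>. max (L \<omega> - \<zeta>) 0 \<partial>Q))"

definition ambiguity_set ::
  "nat \<Rightarrow> (nat \<Rightarrow> nat) \<Rightarrow> nat \<Rightarrow> (nat \<Rightarrow> nat \<times> (nat \<Rightarrow> nat) \<Rightarrow> real) \<Rightarrow> (nat \<Rightarrow> real)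
   \<Rightarrow> (nat \<times> (nat \<Rightarrow> nat) \<Rightarrow> real) \<Rightarrow> real \<Rightarrow> ((nat \<times> (nat \<Rightarrow> nat) \<Rightarrow> real) measure) set" where
  "ambiguity_set N a R W h m s =
     {Q. prob_space Q \<and> sets Q = sets (Pi\<^sub>M (idx N a) (\<lambda>_. borel)) \<and>
         measure Q {p \<in> space Q. \<forall>r<R. (\<Sum>k\<in>idx N a. W r k * p k) \<le> h r} = 1 \<and>
         (\<forall>k\<in>idx N a. integrable Q (\<lambda>p. p k) \<and> (\<integral>p. p k \<partial>Q) = m k) \<and>
         (\<integral>p. (\<Sum>k\<in>idx N a. \<bar>p k - m k\<bar>) \<partial>Q) \<le> s}"

definition worst_cvar ::
  "nat \<Rightarrow> (nat \<Rightarrow> nat) \<Rightarrow> ((nat \<times> (nat \<Rightarrow> nat) \<Rightarrow> real) measure) set \<Rightarrow> (nat \<Rightarrow> real)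
   \<Rightarrow> nat \<Rightarrow> (nat \<Rightarrow> nat \<Rightarrow> real) \<Rightarrow> real" where
  "worst_cvar N a F eps i x = (SUP Q\<in>F. cvar Q (eps i) (\<lambda>p. - payoff N a p i x))"

definition DRO_equilibrium ::
  "nat \<Rightarrow> (nat \<Rightarrow> nat) \<Rightarrow> ((nat \<times> (nat \<Rightarrow> nat) \<Rightarrow> real) measure) set \<Rightarrow> (nat \<Rightarrow> real)
   \<Rightarrow> (nat \<Rightarrow> nat \<Rightarrow> real) \<Rightarrow> bool" where
  "DRO_equilibrium N a F eps x \<longleftrightarrow> x \<in> strat_profiles N a \<and>
     (\<forall>i<N. \<forall>u\<in>strat_simplex (a i). worst_cvar N a F eps i x \<le> worst_cvar N a F eps i (x(i := u)))"

definition Nash_equilibrium ::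
  "nat \<Rightarrow> (nat \<Rightarrow> nat) \<Rightarrow> (nat \<times> (nat \<Rightarrow> nat) \<Rightarrow> real) \<Rightarrow> (nat \<Rightarrow> nat \<Rightarrow> real) \<Rightarrow> bool" where
  "Nash_equilibrium N a P x \<longleftrightarrow> x \<in> strat_profiles N a \<and>
     (\<forall>i<N. \<forall>u\<in>strat_simplex (a i). payoff N a P i (x(i := u)) \<le> payoff N a P i x)"

end

theory Submission
  imports Defs
begin

text \<open>For a risk-neutral player (\<open>\<epsilon> = 1\<close>) CVaR is just the expected loss, and the expected
  payoff is linear in the entries of the payoff matrix, so it depends on a distribution only
  through its mean. Every distribution in the ambiguity set has mean \<open>m\<close>, and the Dirac
  measure at \<open>m\<close> belongs to it, so the worst-case CVaR of player \<open>i\<close> is exactly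
  \<open>-\<pi>\<^sub>i(\<Psi>; x)\<close>. The two equilibrium conditions then coincide.\<close>

lemma expectation_le_cvar_objective:
  fixes L :: "'a \<Rightarrow> real"
  assumes P: "prob_space Q" and L: "integrable Q L"
  shows "(\<integral>\<omega>. L \<omega> \<partial>Q) \<le> \<zeta> + (\<integral>\<omega>. max (L \<omega> - \<zeta>) 0 \<partial>Q)"
proof -
  interpret prob_space Q by (rule P)
  have "(\<integral>\<omega>. L \<omega> \<partial>Q) - \<zeta> = (\<integral>\<omega>. L \<omega> - \<zeta> \<partial>Q)"
    using L by (simp add: prob_space)
  also have "\<dots> \<le> (\<integral>\<omega>. max (L \<omega> - \<zeta>) 0 \<partial>Q)"
    by (intro integral_mono) (use L in auto)
  finally show ?thesis by linarith
qed

lemma integral_lower_tail_tendsto_zero: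
  fixes L :: "'a \<Rightarrow> real"
  assumes L: "integrable Q L"
  shows "(\<lambda>n. \<integral>\<omega>. max (- real n - L \<omega>) 0 \<partial>Q) \<longlonglongrightarrow> 0"
proof -
  have "(\<lambda>n. \<integral>\<omega>. max (- real n - L \<omega>) 0 \<partial>Q) \<longlonglongrightarrow> (\<integral>\<omega>. 0 \<partial>Q)"
  proof (rule integral_dominated_convergence[where w="\<lambda>\<omega>. \<bar>L \<omega>\<bar>"])
    show "(\<lambda>\<omega>. max (- real n - L \<omega>) 0) \<in> borel_measurable Q" for n
      using L by measurable
    show "integrable Q (\<lambda>\<omega>. \<bar>L \<omega>\<bar>)" using L by auto
    show "AE \<omega> in Q. (\<lambda>n. max (- real n - L \<omega>) 0) \<longlonglongrightarrow> 0"
    proof (intro AE_I2 tendsto_eventually)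
      fix \<omega>
      obtain n0 :: nat where "- L \<omega> \<le> real n0" using real_arch_simple by blast
      then show "\<forall>\<^sub>F n in sequentially. max (- real n - L \<omega>) 0 = 0"
        by (auto simp: eventually_sequentially intro!: exI[of _ n0])
    qed
  qed auto
  then show ?thesis by simp
qed

lemma cvar_one_eq_expectation:
  assumes P: "prob_space Q" and L: "integrable Q L"
  shows "cvar Q 1 L = (\<integral>\<omega>. L \<omega> \<partial>Q)"
proof -
  interpret prob_space Q by (rule P)
  define f where "f = (\<lambda>\<zeta>::real. \<zeta> + (\<integral>\<omega>. max (L \<omega> - \<zeta>) 0 \<partial>Q))"
  have lower: "(\<integral>\<omega>. L \<omega> \<partial>Q) \<le> f \<zeta>" for \<zeta>
    unfolding f_def by (rule expectation_le_cvar_objective[OF P L])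
  \<comment> \<open>The infimum is approached as \<open>\<zeta> \<rightarrow> -\<infinity>\<close>, where \<open>f \<zeta>\<close> is the mean plus a vanishing lower tail.\<close>
  have f_minus_n: "f (- real n) = (\<integral>\<omega>. L \<omega> \<partial>Q) + (\<integral>\<omega>. max (- real n - L \<omega>) 0 \<partial>Q)" for n
  proof -
    have "(\<integral>\<omega>. max (L \<omega> + real n) 0 \<partial>Q)
        = (\<integral>\<omega>. (L \<omega> + real n) + max (- real n - L \<omega>) 0 \<partial>Q)"
      by (intro Bochner_Integration.integral_cong) auto
    also have "\<dots> = (\<integral>\<omega>. L \<omega> \<partial>Q) + real n + (\<integral>\<omega>. max (- real n - L \<omega>) 0 \<partial>Q)"
      using L by (simp add: prob_space)
    finally show ?thesis unfolding f_def by simp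
  qed
  have "(\<lambda>n. f (- real n)) \<longlonglongrightarrow> (\<integral>\<omega>. L \<omega> \<partial>Q)"
    unfolding f_minus_n
    using tendsto_add[OF tendsto_const integral_lower_tail_tendsto_zero[OF L]] by simp
  moreover have "bdd_below (range f)"
    using lower by (intro bdd_belowI2)
  ultimately have "(INF \<zeta>. f \<zeta>) \<le> (\<integral>\<omega>. L \<omega> \<partial>Q)"
    by (intro LIMSEQ_le_const) (auto intro: cINF_lower)
  moreover have "(\<integral>\<omega>. L \<omega> \<partial>Q) \<le> (INF \<zeta>. f \<zeta>)"
    by (rule cINF_greatest) (use lower in auto)
  ultimately show ?thesis unfolding cvar_def f_def by simp
qed

lemma
  assumes int: "\<And>j. j \<in> profiles N a \<Longrightarrow> integrable Q (\<lambda>p. p (i, j))"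
    and mean: "\<And>j. j \<in> profiles N a \<Longrightarrow> (\<integral>p. p (i, j) \<partial>Q) = m (i, j)"
  shows integrable_payoff: "integrable Q (\<lambda>p. payoff N a p i x)"
    and integral_payoff: "(\<integral>p. payoff N a p i x \<partial>Q) = payoff N a m i x"
proof -
  show "integrable Q (\<lambda>p. payoff N a p i x)"
    unfolding payoff_def using int by (auto intro!: integrable_sum integrable_mult_left)
  have "(\<integral>p. payoff N a p i x \<partial>Q) = (\<Sum>j\<in>profiles N a. (\<integral>p. p (i, j) \<partial>Q) * (\<Prod>k<N. x k (j k)))"
    unfolding payoff_def using int
    by (subst Bochner_Integration.integral_sum) (auto intro: integrable_mult_left)
  then show "(\<integral>p. payoff N a p i x \<partial>Q) = payoff N a m i x"
    unfolding payoff_def using mean by simp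
qed

lemma worst_cvar_one_eq_neg_payoff_mean:
  assumes "F \<noteq> {}" and i: "i < N"
    and prob: "\<And>Q. Q \<in> F \<Longrightarrow> prob_space Q"
    and int: "\<And>Q k. Q \<in> F \<Longrightarrow> k \<in> idx N a \<Longrightarrow> integrable Q (\<lambda>p. p k)"
    and mean: "\<And>Q k. Q \<in> F \<Longrightarrow> k \<in> idx N a \<Longrightarrow> (\<integral>p. p k \<partial>Q) = m k"
  shows "worst_cvar N a F (\<lambda>_. 1) i x = - payoff N a m i x"
proof -
  have "cvar Q 1 (\<lambda>p. - payoff N a p i x) = - payoff N a m i x" if Q: "Q \<in> F" for Q
  proof -
    have "(i, j) \<in> idx N a" if "j \<in> profiles N a" for j
      using i that unfolding idx_def by simp
    then have "integrable Q (\<lambda>p. payoff N a p i x)" "(\<integral>p. payoff N a p i x \<partial>Q) = payoff N a m i x"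
      using int[OF Q] mean[OF Q] by (blast intro: integrable_payoff integral_payoff)+
    then show ?thesis by (simp add: cvar_one_eq_expectation[OF prob[OF Q]])
  qed
  then show ?thesis unfolding worst_cvar_def using \<open>F \<noteq> {}\<close> by simp
qed

lemma DRO_equilibrium_risk_neutral_iff_Nash_equilibrium:
  assumes "F \<noteq> {}"
    and "\<And>Q. Q \<in> F \<Longrightarrow> prob_space Q"
    and "\<And>Q k. Q \<in> F \<Longrightarrow> k \<in> idx N a \<Longrightarrow> integrable Q (\<lambda>p. p k)"
    and "\<And>Q k. Q \<in> F \<Longrightarrow> k \<in> idx N a \<Longrightarrow> (\<integral>p. p k \<partial>Q) = m k"
  shows "DRO_equilibrium N a F (\<lambda>_. 1) x \<longleftrightarrow> Nash_equilibrium N a m x"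
  using worst_cvar_one_eq_neg_payoff_mean[OF assms(1) _ assms(2-4)]
  unfolding DRO_equilibrium_def Nash_equilibrium_def by auto

lemma return_mean_in_ambiguity_set:
  assumes m_in: "\<forall>r<R. (\<Sum>k\<in>idx N a. W r k * m k) \<le> h r" and "0 \<le> s"
  shows "return (Pi\<^sub>M (idx N a) (\<lambda>_. borel)) (restrict m (idx N a)) \<in> ambiguity_set N a R W h m s"
proof -
  define M where "M = (Pi\<^sub>M (idx N a) (\<lambda>_. (borel :: real measure)))"
  define m' where "m' = restrict m (idx N a)"
  have m'_space: "m' \<in> space M" unfolding M_def m'_def space_PiM by auto
  have coord: "(\<lambda>p. p k) \<in> borel_measurable M" if "k \<in> idx N a" for k
    unfolding M_def using that by measurable
  have polytope: "{p \<in> space M. \<forall>r<R. (\<Sum>k\<in>idx N a. W r k * p k) \<le> h r} \<in> sets M"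
    unfolding M_def by measurable
  have "m' \<in> {p \<in> space M. \<forall>r<R. (\<Sum>k\<in>idx N a. W r k * p k) \<le> h r}"
    using m'_space m_in unfolding m'_def by simp
  moreover have "(\<lambda>p. \<Sum>k\<in>idx N a. \<bar>p k - m k\<bar>) \<in> borel_measurable M"
    using coord by (intro borel_measurable_sum) auto
  moreover have "integrable (return M m') (\<lambda>p. p k)" if "k \<in> idx N a" for k
  proof -
    interpret prob_space "return M m'" by (rule prob_space_return[OF m'_space])
    show ?thesis
      unfolding integrable_iff_bounded using that coord m'_space by (simp add: nn_integral_return)
  qed
  ultimately show ?thesis
    unfolding ambiguity_set_def M_def[symmetric] m'_def[symmetric]
    using prob_space_return[OF m'_space] coord m'_space \<open>0 \<le> s\<close>
    by (auto simp: measure_return[OF polytope] integral_return m'_def)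
qed

theorem proposition1:
  fixes N :: nat and a :: "nat \<Rightarrow> nat" and R :: nat
    and W :: "nat \<Rightarrow> nat \<times> (nat \<Rightarrow> nat) \<Rightarrow> real" and h :: "nat \<Rightarrow> real"
    and m :: "nat \<times> (nat \<Rightarrow> nat) \<Rightarrow> real" and s :: real
  assumes bounded_poly: "\<exists>B. \<forall>p. (\<forall>r<R. (\<Sum>k\<in>idx N a. W r k * p k) \<le> h r)
                              \<longrightarrow> (\<forall>k\<in>idx N a. \<bar>p k\<bar> \<le> B)"
    and m_in: "\<forall>r<R. (\<Sum>k\<in>idx N a. W r k * m k) \<le> h r"
    and s_nonneg: "0 \<le> s"
  shows "{x. DRO_equilibrium N a (ambiguity_set N a R W h m s) (\<lambda>_. 1) x}
       = {x. Nash_equilibrium N a m x}"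
proof -
  have "ambiguity_set N a R W h m s \<noteq> {}"
    using return_mean_in_ambiguity_set[OF m_in s_nonneg] by blast
  moreover have "prob_space Q"
    and "\<And>k. k \<in> idx N a \<Longrightarrow> integrable Q (\<lambda>p. p k) \<and> (\<integral>p. p k \<partial>Q) = m k"
    if "Q \<in> ambiguity_set N a R W h m s" for Q
    using that unfolding ambiguity_set_def by auto
  ultimately show ?thesis
    using DRO_equilibrium_risk_neutral_iff_Nash_equilibrium[where F="ambiguity_set N a R W h m s"]
    by blast
qed

end
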